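(* Let $i\in\{1,\dots,d\}$, let $I\subseteq\{1,\dots,d\}$ with $|I|=i$, and let $\omega=(\omega_0,\dots,\omega_d)\in\mathbb{R}^{d+1}_{>0}$. Then, identifying $L_I=\operatorname{span}\{e_k:k\in I\}$ with $\mathbb{R}^I$ by restricting to the coordinates in $I$, $$S(\omega)\cap L_I=S\Big(\frac{1}{\sum_{k\in\{0,\dots,d\}\setminus I}\frac{1}{\omega_k}},\ (\omega_j)_{j\in I}\Big)\subseteq\mathbb{R}^I.$$
   Context: For $\omega=(\omega_0,\dots,\omega_n)\in\mathbb{R}^{n+1}_{>0}$, $S(\omega)=\operatorname{conv}(-\omega_0\mathbb{1}_n,\omega_1e_1,\dots,\omega_ne_n)\subseteq\mathbb{R}^n$, where $\mathbb{1}_n$ is the all-ones vector and $e_k$ the standard basis vectors. In the right-hand side, the first weight plays the role of $\omega_0$ and the coordinates of $\mathbb{R}^I$ are indexed by $I$. *)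

theory Defs
  imports "HOL-Analysis.Analysis"
begin

text \<open>S restricted to the coordinate set J, realised inside real^'n as the
coordinate subspace L_J (vectors vanishing outside J):
  S_J(w0, (w_j)_{j in J}) = conv(-w0 * 1_J, w_j e_j (j in J)).\<close>
definition S_on :: "'n::finite set \<Rightarrow> real \<Rightarrow> real^'n \<Rightarrow> (real^'n) set" where
  "S_on J w0 w = convex hull
     (insert (\<chi> k. if k \<in> J then - w0 else 0) ((\<lambda>j. w $ j *\<^sub>R axis j 1) ` J))"

definition S :: "real \<Rightarrow> real^'n::finite \<Rightarrow> (real^'n) set" where
  "S w0 w = S_on UNIV w0 w"

definition L :: "'n::finite set \<Rightarrow> (real^'n) set" where
  "L I = span ((\<lambda>k. axis k 1) ` I)"

end

theory Submission
  imports Defs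
begin

text \<open>Write a point of \<open>S_on J w0 w\<close> in barycentric coordinates: weight \<open>t\<close> on the vertex
\<open>-w0 1_J\<close> and \<open>l k\<close> on \<open>w k e_k\<close>. Its \<open>k\<close>-th coordinate is \<open>-t w0 + l k w k\<close>, so it lies in
\<open>L I\<close> exactly when \<open>l k = t w0 / w k\<close> for all \<open>k \<in> J - I\<close>. These weights add up to
\<open>t w0 (D - 1/w0)\<close> with \<open>D = 1/w0 + (\<Sum>k\<in>J - I. 1 / w k)\<close>, and merging them into the first
vertex yields the barycentric coordinates of a point of \<open>S_on I (1/D) w\<close>, with weight \<open>t w0 D\<close>
on \<open>-1/D 1_I\<close>. The correspondence is bijective.\<close>

lemma L_eq_vanishing_outside: "L I = {x :: real^'n::finite. \<forall>k. k \<notin> I \<longrightarrow> x $ k = 0}"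
proof -
  have "(\<lambda>k. axis k 1) ` I \<subseteq> (Basis :: (real^'n) set)"
    by (auto simp: Basis_vec_def)
  then show ?thesis
    unfolding L_def by (subst span_substd_basis) (auto simp: Basis_vec_def inner_axis axis_eq_axis)
qed

lemma mem_convex_hull_insert_image:
  fixes f :: "'a \<Rightarrow> 'b::real_vector"
  assumes "finite J" and "inj_on f J" and "p \<notin> f ` J"
  shows "x \<in> convex hull (insert p (f ` J)) \<longleftrightarrow>
    (\<exists>t l. 0 \<le> t \<and> (\<forall>j\<in>J. 0 \<le> l j) \<and> t + sum l J = 1 \<and> x = t *\<^sub>R p + (\<Sum>j\<in>J. l j *\<^sub>R f j))"
    (is "_ \<longleftrightarrow> ?barycentric")
proof -
  have sum_insert_image: "sum g (insert p (f ` J)) = g p + (\<Sum>j\<in>J. g (f j))"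
    for g :: "'b \<Rightarrow> 'c::comm_monoid_add"
    using assms by (simp add: sum.reindex)
  have hull_finite: "x \<in> convex hull (insert p (f ` J)) \<longleftrightarrow>
    (\<exists>u. (\<forall>y\<in>insert p (f ` J). 0 \<le> u y) \<and> sum u (insert p (f ` J)) = 1 \<and>
         (\<Sum>y\<in>insert p (f ` J). u y *\<^sub>R y) = x)"
    using assms(1) by (simp add: convex_hull_finite)
  show ?thesis
  proof
    assume "x \<in> convex hull (insert p (f ` J))"
    then obtain u where "\<forall>y\<in>insert p (f ` J). 0 \<le> u y" "sum u (insert p (f ` J)) = 1"
      "(\<Sum>y\<in>insert p (f ` J). u y *\<^sub>R y) = x"
      using hull_finite by blast
    then show ?barycentric
      by (intro exI[of _ "u p"] exI[of _ "u \<circ> f"]) (auto simp: sum_insert_image)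
  next
    assume ?barycentric
    then obtain t l where tl: "0 \<le> t" "\<forall>j\<in>J. 0 \<le> l j" "t + sum l J = 1"
      "x = t *\<^sub>R p + (\<Sum>j\<in>J. l j *\<^sub>R f j)" by blast
    define u where "u y = (if y = p then t else l (inv_into J f y))" for y
    have "u p = t" and "\<And>j. j \<in> J \<Longrightarrow> u (f j) = l j"
      using assms(2,3) by (auto simp: u_def)
    then show "x \<in> convex hull (insert p (f ` J))"
      unfolding hull_finite using tl by (intro exI[of _ u]) (auto simp: sum_insert_image)
  qed
qed

lemma mem_S_on_iff:
  fixes J :: "'n::finite set" and w :: "real^'n"
  assumes "a > 0" and "\<forall>k\<in>J. w $ k > 0"
  shows "x \<in> S_on J a w \<longleftrightarrow>
    (\<exists>t l. 0 \<le> t \<and> (\<forall>j\<in>J. 0 \<le> l j) \<and> t + sum l J = 1 \<and>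
       (\<forall>k. x $ k = (if k \<in> J then - t * a + l k * w $ k else 0)))"
proof -
  define p :: "real^'n" where "p = (\<chi> k. if k \<in> J then - a else 0)"
  define f :: "'n \<Rightarrow> real^'n" where "f j = w $ j *\<^sub>R axis j 1" for j
  have f_nth: "f j $ k = (if k = j then w $ j else 0)" for j k
    by (simp add: f_def axis_def)
  have "inj_on f J"
  proof (rule inj_onI)
    fix i j assume "i \<in> J" "f i = f j"
    then have "f j $ i = w $ i" by (metis f_nth)
    then show "i = j" using assms(2) \<open>i \<in> J\<close> by (auto simp: f_nth split: if_splits)
  qed
  moreover have "p \<notin> f ` J"
  proof
    assume "p \<in> f ` J"
    then obtain j where "j \<in> J" "p $ j = f j $ j" by auto
    then show False using assms by (simp add: p_def f_nth) (metis neg_less_0_iff_less not_less_iff_gr_or_eq)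
  qed
  moreover have "(t *\<^sub>R p + (\<Sum>j\<in>J. l j *\<^sub>R f j)) $ k = (if k \<in> J then - t * a + l k * w $ k else 0)"
    for t l k
    by (simp add: p_def f_nth sum_component if_distrib[of "\<lambda>c. l _ * c"] sum.delta' cong: if_cong)
  ultimately show ?thesis
    unfolding S_on_def p_def[symmetric] f_def[symmetric]
    by (simp add: mem_convex_hull_insert_image vec_eq_iff)
qed

lemma harmonic_weight_pos:
  fixes w :: "real^'n::finite"
  assumes "w0 > 0" and "\<forall>k\<in>K. w $ k > 0"
  shows "1 / w0 + (\<Sum>k\<in>K. 1 / w $ k) > 0"
  using assms by (intro add_pos_nonneg sum_nonneg) (auto simp: less_imp_le)

lemma S_on_Int_L_subset:
  fixes I J :: "'n::finite set" and w :: "real^'n"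
  assumes "I \<subseteq> J" and "w0 > 0" and "\<forall>k\<in>J. w $ k > 0"
  shows "S_on J w0 w \<inter> L I \<subseteq> S_on I (1 / (1 / w0 + (\<Sum>k\<in>J - I. 1 / w $ k))) w"
proof
  fix x assume x: "x \<in> S_on J w0 w \<inter> L I"
  define D where "D = 1 / w0 + (\<Sum>k\<in>J - I. 1 / w $ k)"
  have "D > 0"
    unfolding D_def using assms by (intro harmonic_weight_pos) auto
  obtain t l where "0 \<le> t" and l_nonneg: "\<forall>j\<in>J. 0 \<le> l j" and "t + sum l J = 1"
    and x_nth: "\<forall>k. x $ k = (if k \<in> J then - t * w0 + l k * w $ k else 0)"
    using x mem_S_on_iff[OF assms(2,3)] by blast
  have vanish: "\<forall>k. k \<notin> I \<longrightarrow> x $ k = 0"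
    using x by (simp add: L_eq_vanishing_outside)
  have "l k = t * w0 * (1 / w $ k)" if "k \<in> J - I" for k
  proof -
    have "- t * w0 + l k * w $ k = 0" and "w $ k > 0"
      using x_nth[rule_format, of k] vanish[rule_format, of k] assms(3) that by auto
    then show ?thesis by (simp add: field_simps)
  qed
  then have "sum l (J - I) = t * w0 * D - t"
    using \<open>w0 > 0\<close> by (simp add: D_def sum_distrib_left distrib_left)
  then have "t * w0 * D + sum l I = 1"
    using \<open>t + sum l J = 1\<close> sum.subset_diff[OF assms(1), of l] by simp
  moreover have "\<forall>k. x $ k = (if k \<in> I then - (t * w0 * D) * (1 / D) + l k * w $ k else 0)"
    using x_nth vanish assms(1) \<open>D > 0\<close> by auto
  moreover have "\<forall>j\<in>I. 0 \<le> l j" and "1 / D > 0" and "\<forall>k\<in>I. w $ k > 0"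
    using l_nonneg assms(1,3) \<open>D > 0\<close> by auto
  moreover have "0 \<le> t * w0 * D"
    using \<open>0 \<le> t\<close> \<open>w0 > 0\<close> \<open>D > 0\<close> by simp
  ultimately show "x \<in> S_on I (1 / D) w"
    by (subst mem_S_on_iff) blast+
qed

lemma S_on_subset_S_on_Int_L:
  fixes I J :: "'n::finite set" and w :: "real^'n"
  assumes "I \<subseteq> J" and "w0 > 0" and "\<forall>k\<in>J. w $ k > 0"
  shows "S_on I (1 / (1 / w0 + (\<Sum>k\<in>J - I. 1 / w $ k))) w \<subseteq> S_on J w0 w \<inter> L I"
proof
  define D where "D = 1 / w0 + (\<Sum>k\<in>J - I. 1 / w $ k)"
  have "D > 0"
    unfolding D_def using assms by (intro harmonic_weight_pos) auto
  fix x assume "x \<in> S_on I (1 / D) w"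
  moreover have "1 / D > 0" and "\<forall>k\<in>I. w $ k > 0"
    using assms(1,3) \<open>D > 0\<close> by auto
  ultimately obtain s l where "0 \<le> s" and l_nonneg: "\<forall>j\<in>I. 0 \<le> l j" and "s + sum l I = 1"
    and x_nth: "\<forall>k. x $ k = (if k \<in> I then - s * (1 / D) + l k * w $ k else 0)"
    using mem_S_on_iff by blast
  define t where "t = s / (D * w0)"
  define l' where "l' k = (if k \<in> I then l k else s / D * (1 / w $ k))" for k
  have "sum l' (J - I) = s / D * (D - 1 / w0)"
    by (simp add: l'_def D_def sum_distrib_left)
  also have "\<dots> = s - t"
    using \<open>D > 0\<close> \<open>w0 > 0\<close> by (simp add: t_def field_simps)
  finally have "t + sum l' J = 1"
    using \<open>s + sum l I = 1\<close> sum.subset_diff[OF assms(1), of l'] by (simp add: l'_def)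
  moreover have "\<forall>k. x $ k = (if k \<in> J then - t * w0 + l' k * w $ k else 0)"
    using x_nth assms \<open>D > 0\<close> by (auto simp: t_def l'_def field_simps)
  moreover have "0 \<le> t" and "\<forall>j\<in>J. 0 \<le> l' j"
    using \<open>0 \<le> s\<close> l_nonneg assms(3) \<open>D > 0\<close> \<open>w0 > 0\<close> by (auto simp: t_def l'_def)
  ultimately have "x \<in> S_on J w0 w"
    using mem_S_on_iff[OF assms(2,3)] by blast
  moreover have "x \<in> L I"
    using x_nth by (simp add: L_eq_vanishing_outside)
  ultimately show "x \<in> S_on J w0 w \<inter> L I" by blast
qed

lemma S_on_Int_L:
  fixes I J :: "'n::finite set" and w :: "real^'n"
  assumes "I \<subseteq> J" and "w0 > 0" and "\<forall>k\<in>J. w $ k > 0"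
  shows "S_on J w0 w \<inter> L I = S_on I (1 / (1 / w0 + (\<Sum>k\<in>J - I. 1 / w $ k))) w"
  using S_on_Int_L_subset[OF assms] S_on_subset_S_on_Int_L[OF assms] by (rule equalityI)

theorem lemma5p4:
  fixes I :: "'n::finite set" and w0 :: real and w :: "real^'n"
  assumes "I \<noteq> {}"
    and "w0 > 0" and "\<forall>k. w $ k > 0"
  shows "S w0 w \<inter> L I = S_on I (1 / (1 / w0 + (\<Sum>k\<in>UNIV - I. 1 / w $ k))) w"
  unfolding S_def using assms(2,3) by (intro S_on_Int_L) auto

end
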